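(* Let $\Delta\ge 1$ be an integer. There exists a $4$-$\gamma_t$-critical graph $G$ of order $\Delta(G)+4$ with $\Delta(G)=\Delta$ and $\delta(G)\ge 2$ if and only if $\Delta\in\{2,4,6,8\}$ or $\Delta\ge 9$.
   Context: All graphs are finite and simple; $\Delta(G)$, $\delta(G)$ are maximum and minimum degree. A set $S\subseteq V(G)$ is a total dominating set if every vertex of $G$ is adjacent to some vertex of $S$; $\gamma_t(G)$ is the minimum size of such a set. A leaf is a vertex of degree one. A graph $G$ with no isolated vertex is $\gamma_t$-critical if for every vertex $v$ not adjacent to a leaf, $\gamma_t(G-v)<\gamma_t(G)$; it is $m$-$\gamma_t$-critical if moreover $\gamma_t(G)=m$. *)

theory Defs
  imports Main
begin

text \<open>Finite simple graphs on a vertex set V of naturals (every finite graph is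
isomorphic to one of these), with symmetric irreflexive adjacency E restricted to V.\<close>

definition simple_graph :: "nat set \<Rightarrow> (nat \<Rightarrow> nat \<Rightarrow> bool) \<Rightarrow> bool" where
  "simple_graph V E \<longleftrightarrow> finite V \<and> (\<forall>u v. E u v \<longrightarrow> u \<in> V \<and> v \<in> V)
     \<and> (\<forall>u v. E u v \<longrightarrow> E v u) \<and> (\<forall>v. \<not> E v v)"

definition degree :: "nat set \<Rightarrow> (nat \<Rightarrow> nat \<Rightarrow> bool) \<Rightarrow> nat \<Rightarrow> nat" where
  "degree V E v = card {u \<in> V. E v u}"

definition max_degree :: "nat set \<Rightarrow> (nat \<Rightarrow> nat \<Rightarrow> bool) \<Rightarrow> nat" where
  "max_degree V E = Max (degree V E ` V)"

definition min_degree :: "nat set \<Rightarrow> (nat \<Rightarrow> nat \<Rightarrow> bool) \<Rightarrow> nat" where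
  "min_degree V E = Min (degree V E ` V)"

definition is_leaf :: "nat set \<Rightarrow> (nat \<Rightarrow> nat \<Rightarrow> bool) \<Rightarrow> nat \<Rightarrow> bool" where
  "is_leaf V E v \<longleftrightarrow> v \<in> V \<and> degree V E v = 1"

definition no_isolated :: "nat set \<Rightarrow> (nat \<Rightarrow> nat \<Rightarrow> bool) \<Rightarrow> bool" where
  "no_isolated V E \<longleftrightarrow> (\<forall>v \<in> V. \<exists>u \<in> V. E v u)"

definition total_dominating :: "nat set \<Rightarrow> (nat \<Rightarrow> nat \<Rightarrow> bool) \<Rightarrow> nat set \<Rightarrow> bool" where
  "total_dominating V E S \<longleftrightarrow> S \<subseteq> V \<and> (\<forall>v \<in> V. \<exists>u \<in> S. E v u)"

definition gamma_t :: "nat set \<Rightarrow> (nat \<Rightarrow> nat \<Rightarrow> bool) \<Rightarrow> nat" where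
  "gamma_t V E = (LEAST n. \<exists>S. total_dominating V E S \<and> card S = n)"

definition del_vertex_edges :: "(nat \<Rightarrow> nat \<Rightarrow> bool) \<Rightarrow> nat \<Rightarrow> (nat \<Rightarrow> nat \<Rightarrow> bool)" where
  "del_vertex_edges E v = (\<lambda>a b. E a b \<and> a \<noteq> v \<and> b \<noteq> v)"

definition gamma_t_critical :: "nat set \<Rightarrow> (nat \<Rightarrow> nat \<Rightarrow> bool) \<Rightarrow> bool" where
  "gamma_t_critical V E \<longleftrightarrow> no_isolated V E \<and>
     (\<forall>v \<in> V. (\<not> (\<exists>u. E v u \<and> is_leaf V E u)) \<longrightarrow>
        gamma_t (V - {v}) (del_vertex_edges E v) < gamma_t V E)"

definition m_gamma_t_critical :: "nat \<Rightarrow> nat set \<Rightarrow> (nat \<Rightarrow> nat \<Rightarrow> bool) \<Rightarrow> bool" where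
  "m_gamma_t_critical m V E \<longleftrightarrow> gamma_t_critical V E \<and> gamma_t V E = m"

end

theory Submission
  imports Defs
begin

(* Let v be a vertex of maximum degree, N its neighbourhood and A the three remaining vertices.
   The critical set of v (a total dominating set of G - v of size 3) must avoid N, so it is A;
   from this A is a path a - c - b and N splits into X = N(a) and Y = N(b).  Such a "skeleton"
   is 4-gamma_t-critical exactly when the graph on X u Y satisfies a combinatorial condition
   ("admissible X Y" and "admissible Y X"): its three clauses say that {a,c,p} and {a,p,t} are
   not total dominating sets and that every s in X has a small total dominating set of G - s. *)

lemma gamma_t_le: "total_dominating V E S \<Longrightarrow> gamma_t V E \<le> card S"
  unfolding gamma_t_def by (rule Least_le) blast

lemma gamma_t_eqI:
  assumes "total_dominating V E S0" "card S0 = m" "\<And>S. total_dominating V E S \<Longrightarrow> m \<le> card S"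
  shows "gamma_t V E = m"
  unfolding gamma_t_def by (rule Least_equality) (use assms in auto)

lemma gamma_t_witness:
  assumes "total_dominating V E S"
  shows "\<exists>S'. total_dominating V E S' \<and> card S' = gamma_t V E"
  unfolding gamma_t_def by (rule LeastI_ex) (use assms in blast)

lemma simple_graph_sym: "simple_graph V E \<Longrightarrow> E x y \<longleftrightarrow> E y x"
  and simple_graph_irrefl: "simple_graph V E \<Longrightarrow> \<not> E x x"
  unfolding simple_graph_def by blast+

lemma card_le_3: "card {p, q, r} \<le> 3"
  by (simp add: card_insert_if)

lemma gamma_t_delete_lt_4:
  assumes "S \<subseteq> V - {w}" "card S \<le> 3" "\<forall>z \<in> V. z \<noteq> w \<longrightarrow> (\<exists>u \<in> S. E z u)"
  shows "gamma_t (V - {w}) (del_vertex_edges E w) < 4"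
proof -
  have "total_dominating (V - {w}) (del_vertex_edges E w) S"
    using assms unfolding total_dominating_def del_vertex_edges_def by blast
  then show ?thesis using gamma_t_le assms(2) by fastforce
qed

lemma mem_three_set:
  assumes "finite S" "card S \<le> 3" "{x, y, z} \<subseteq> S" "distinct [x, y, z]" "u \<in> S"
  shows "u = x \<or> u = y \<or> u = z"
proof -
  have "card {x, y, z} = 3" using assms(4) by simp
  then have "{x, y, z} = S" using card_subset_eq[OF assms(1,3)] assms(2) card_mono[OF assms(1,3)] by simp
  then show ?thesis using assms(5) by auto
qed

text \<open>The graph on the two sides X, Y of N(v).  For s \<in> X, the vertex t \<in> Y is a deletion
  witness if {b, c, t} or, for a suitable q \<in> X, {b, t, q} totally dominates G - s.\<close>

definition deletion_witness :: "nat set \<Rightarrow> (nat \<Rightarrow> nat \<Rightarrow> bool) \<Rightarrow> nat \<Rightarrow> nat \<Rightarrow> bool" where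
  "deletion_witness X E s t \<longleftrightarrow> \<not> E s t \<and>
     ((\<forall>x \<in> X. x \<noteq> s \<longrightarrow> E x t) \<or>
      (\<exists>q \<in> X. q \<noteq> s \<and> \<not> E s q \<and> E q t \<and> (\<forall>x \<in> X. x \<noteq> s \<longrightarrow> E x t \<or> E x q)))"

lemma deletion_witness_direct:
  assumes "\<not> E s t" "\<And>x. x \<in> X \<Longrightarrow> x \<noteq> s \<Longrightarrow> E x t"
  shows "deletion_witness X E s t"
  unfolding deletion_witness_def using assms by blast

lemma deletion_witness_pair:
  assumes "\<not> E s t" "q \<in> X" "q \<noteq> s" "\<not> E s q" "E q t"
    "\<And>x. x \<in> X \<Longrightarrow> x \<noteq> s \<Longrightarrow> E x t \<or> E x q"
  shows "deletion_witness X E s t"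
  unfolding deletion_witness_def using assms by blast

text \<open>Admissibility of side X: no set {a, c, p} (p \<in> X) or {a, p, t} (p \<in> X, t \<in> Y adjacent)
  totally dominates G, and every s \<in> X has a deletion witness.\<close>

definition admissible :: "nat set \<Rightarrow> nat set \<Rightarrow> (nat \<Rightarrow> nat \<Rightarrow> bool) \<Rightarrow> bool" where
  "admissible X Y E \<longleftrightarrow>
     (\<forall>p \<in> X. \<exists>t \<in> Y. \<not> E p t) \<and>
     (\<forall>p \<in> X. \<forall>t \<in> Y. E p t \<longrightarrow> (\<exists>y \<in> Y. \<not> E y p \<and> \<not> E y t)) \<and>
     (\<forall>s \<in> X. \<exists>t \<in> Y. deletion_witness X E s t)"

lemma admissible_non_neighbour:
  "admissible X Y E \<Longrightarrow> p \<in> X \<Longrightarrow> \<exists>t \<in> Y. \<not> E p t"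
  unfolding admissible_def by blast

lemma admissible_common_non_neighbour:
  "admissible X Y E \<Longrightarrow> p \<in> X \<Longrightarrow> t \<in> Y \<Longrightarrow> E p t \<Longrightarrow> \<exists>y \<in> Y. \<not> E y p \<and> \<not> E y t"
  unfolding admissible_def by blast

lemma admissible_deletion:
  "admissible X Y E \<Longrightarrow> s \<in> X \<Longrightarrow> \<exists>t \<in> Y. deletion_witness X E s t"
  unfolding admissible_def by blast

locale skeleton =
  fixes V :: "nat set" and E :: "nat \<Rightarrow> nat \<Rightarrow> bool"
    and v a b c :: nat and X Y :: "nat set"
  assumes graph: "simple_graph V E"
    and vertices: "V = {v, a, b, c} \<union> X \<union> Y"
    and hub_distinct: "distinct [v, a, b, c]"
    and sides_disjoint: "X \<inter> Y = {}"
    and hub_outside: "{v, a, b, c} \<inter> (X \<union> Y) = {}"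
    and adj_v: "\<And>u. E v u \<longleftrightarrow> u \<in> X \<union> Y"
    and adj_a: "\<And>u. E a u \<longleftrightarrow> u = c \<or> u \<in> X"
    and adj_b: "\<And>u. E b u \<longleftrightarrow> u = c \<or> u \<in> Y"
    and adj_c: "\<And>u. E c u \<longleftrightarrow> u = a \<or> u = b"
begin

lemma sym: "E x y \<longleftrightarrow> E y x"
  using simple_graph_sym[OF graph] .

lemma irrefl [simp]: "\<not> E x x"
  using simple_graph_irrefl[OF graph] .

lemma finite_V: "finite V"
  using graph unfolding simple_graph_def by blast

lemma finite_sides: "finite X" "finite Y"
  using finite_V vertices by auto

lemma adj_simps [simp]:
  "E v u \<longleftrightarrow> u \<in> X \<union> Y" "E a u \<longleftrightarrow> u = c \<or> u \<in> X"
  "E b u \<longleftrightarrow> u = c \<or> u \<in> Y" "E c u \<longleftrightarrow> u = a \<or> u = b"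
  "E u v \<longleftrightarrow> u \<in> X \<union> Y" "E u a \<longleftrightarrow> u = c \<or> u \<in> X"
  "E u b \<longleftrightarrow> u = c \<or> u \<in> Y" "E u c \<longleftrightarrow> u = a \<or> u = b"
  using adj_v adj_a adj_b adj_c sym by blast+

lemma hub_simps [simp]:
  "v \<noteq> a" "v \<noteq> b" "v \<noteq> c" "a \<noteq> b" "a \<noteq> c" "b \<noteq> c"
  "a \<noteq> v" "b \<noteq> v" "c \<noteq> v" "b \<noteq> a" "c \<noteq> a" "c \<noteq> b"
  "v \<notin> X" "v \<notin> Y" "a \<notin> X" "a \<notin> Y" "b \<notin> X" "b \<notin> Y" "c \<notin> X" "c \<notin> Y"
  using hub_distinct hub_outside by auto

lemma in_V_cases:
  assumes "z \<in> V" obtains "z = v" | "z = a" | "z = b" | "z = c" | "z \<in> X" | "z \<in> Y"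
  using assms vertices by auto

lemma ball_V: "(\<forall>z \<in> V. P z) \<longleftrightarrow> P v \<and> P a \<and> P b \<and> P c \<and> (\<forall>x \<in> X. P x) \<and> (\<forall>y \<in> Y. P y)"
  using vertices by auto

lemma sides_in_V: "X \<subseteq> V" "Y \<subseteq> V" "v \<in> V" "a \<in> V" "b \<in> V" "c \<in> V"
  using vertices by auto

lemma side_ne_hub: "u \<in> X \<union> Y \<Longrightarrow> u \<noteq> v \<and> u \<noteq> a \<and> u \<noteq> b \<and> u \<noteq> c"
  using hub_outside by auto

lemma hub_ne_side [simp]:
  "u \<in> X \<Longrightarrow> v \<noteq> u" "u \<in> X \<Longrightarrow> a \<noteq> u" "u \<in> X \<Longrightarrow> b \<noteq> u" "u \<in> X \<Longrightarrow> c \<noteq> u"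
  "u \<in> Y \<Longrightarrow> v \<noteq> u" "u \<in> Y \<Longrightarrow> a \<noteq> u" "u \<in> Y \<Longrightarrow> b \<noteq> u" "u \<in> Y \<Longrightarrow> c \<noteq> u"
  "u \<in> X \<Longrightarrow> u \<noteq> v" "u \<in> X \<Longrightarrow> u \<noteq> a" "u \<in> X \<Longrightarrow> u \<noteq> b" "u \<in> X \<Longrightarrow> u \<noteq> c"
  "u \<in> Y \<Longrightarrow> u \<noteq> v" "u \<in> Y \<Longrightarrow> u \<noteq> a" "u \<in> Y \<Longrightarrow> u \<noteq> b" "u \<in> Y \<Longrightarrow> u \<noteq> c"
  using hub_outside by blast+

lemma side_not_both: "x \<in> X \<Longrightarrow> x \<notin> Y"
  using sides_disjoint by blast

lemma swap: "skeleton V E v b a c Y X"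
  by unfold_locales (use graph vertices hub_distinct sides_disjoint hub_outside in auto)

text \<open>Sufficiency.  A total dominating set of size 3 containing a contradicts admissibility of X:
  it must also contain c (then it is {a, c, p}) or a vertex of X and one of Y.\<close>

lemma no_tds_containing_a:
  assumes adm: "admissible X Y E" and S: "S \<subseteq> V" "card S \<le> 3"
    and dom: "\<forall>w \<in> V. \<exists>u \<in> S. E w u" and aS: "a \<in> S"
  shows False
proof -
  have fS: "finite S" using S(1) finite_V finite_subset by blast
  have nbr: "\<exists>u \<in> S. E w u" if "w \<in> V" for w using dom that by blast
  obtain p where p: "p \<in> S" "E v p" using nbr sides_in_V by blast
  then have pXY: "p \<in> X \<union> Y" by simp
  show False
  proof (cases "c \<in> S")
    case True
    have inS: "w \<in> S \<Longrightarrow> w = a \<or> w = c \<or> w = p" for w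
      using mem_three_set[OF fS S(2), of a c p w] aS True p side_ne_hub[OF pXY] by auto
    have pX: "p \<in> X"
    proof (rule ccontr)
      assume "p \<notin> X"
      then have "p \<in> Y" using pXY by blast
      obtain w where "w \<in> S" "E p w" using nbr \<open>p \<in> Y\<close> sides_in_V by blast
      then show False using inS[of w] \<open>p \<notin> X\<close> side_ne_hub[OF pXY] by auto
    qed
    obtain t where t: "t \<in> Y" "\<not> E p t" using admissible_non_neighbour[OF adm pX] by blast
    obtain w where "w \<in> S" "E t w" using nbr t(1) sides_in_V by blast
    then show False using inS[of w] t side_not_both side_ne_hub[of t] sym by auto
  next
    case False
    obtain x where x: "x \<in> S" "E a x" using nbr sides_in_V by blast
    with False have xX: "x \<in> X" by auto
    obtain t where t: "t \<in> S" "E b t" using nbr sides_in_V by blast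
    with False have tY: "t \<in> Y" by auto
    have inS: "w \<in> S \<Longrightarrow> w = a \<or> w = x \<or> w = t" for w
      using mem_three_set[OF fS S(2), of a x t w] aS x t xX tY side_not_both side_ne_hub by auto
    obtain w where "w \<in> S" "E t w" using nbr tY sides_in_V by blast
    then have "E x t" using inS[of w] tY side_not_both side_ne_hub[of t] sym by auto
    then obtain y where y: "y \<in> Y" "\<not> E y x" "\<not> E y t"
      using admissible_common_non_neighbour[OF adm xX tY] by blast
    obtain w' where "w' \<in> S" "E y w'" using nbr y(1) sides_in_V by blast
    then show False using inS[of w'] y side_not_both side_ne_hub[of y] by auto
  qed
qed

text \<open>Some vertex of a total dominating set sees c, so it contains a or b.\<close>

lemma tds_card_ge_4:
  assumes "admissible X Y E" "admissible Y X E" and T: "total_dominating V E S"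
  shows "4 \<le> card S"
proof (rule ccontr)
  assume "\<not> 4 \<le> card S"
  then have "card S \<le> 3" by simp
  moreover have S: "S \<subseteq> V" "\<forall>w \<in> V. \<exists>u \<in> S. E w u" using T unfolding total_dominating_def by auto
  moreover have "a \<in> S \<or> b \<in> S" using S sides_in_V by fastforce
  ultimately show False
    using no_tds_containing_a[OF assms(1)] skeleton.no_tds_containing_a[OF swap assms(2)] by blast
qed

lemma gamma_t_eq_4:
  assumes "admissible X Y E" "admissible Y X E" and x: "x \<in> X" and y: "y \<in> Y"
  shows "gamma_t V E = 4"
proof (rule gamma_t_eqI)
  show "total_dominating V E {a, x, b, y}"
    unfolding total_dominating_def using x y sides_in_V by (auto simp: ball_V)
  show "card {a, x, b, y} = 4"
    using x y side_not_both by (auto simp: card_insert_if)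
qed (use tds_card_ge_4[OF assms(1,2)] in blast)

lemma delete_side_vertex:
  assumes adm: "admissible X Y E" and s: "s \<in> X"
  shows "gamma_t (V - {s}) (del_vertex_edges E s) < 4"
proof -
  obtain t where t: "t \<in> Y" "\<not> E s t" and
    alt: "(\<forall>x \<in> X. x \<noteq> s \<longrightarrow> E x t) \<or>
       (\<exists>q \<in> X. q \<noteq> s \<and> \<not> E s q \<and> E q t \<and> (\<forall>x \<in> X. x \<noteq> s \<longrightarrow> E x t \<or> E x q))"
    using admissible_deletion[OF adm s] unfolding deletion_witness_def by blast
  have ts: "t \<noteq> s" using t s side_not_both by blast
  from alt show ?thesis
  proof
    assume "\<forall>x \<in> X. x \<noteq> s \<longrightarrow> E x t"
    then show ?thesis
      by (intro gamma_t_delete_lt_4[of "{b, c, t}"] card_le_3)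
        (use t s ts sides_in_V in \<open>auto simp: ball_V\<close>)
  next
    assume "\<exists>q \<in> X. q \<noteq> s \<and> \<not> E s q \<and> E q t \<and> (\<forall>x \<in> X. x \<noteq> s \<longrightarrow> E x t \<or> E x q)"
    then obtain q where q: "q \<in> X" "q \<noteq> s" "E q t" "\<forall>x \<in> X. x \<noteq> s \<longrightarrow> E x t \<or> E x q" by blast
    show ?thesis
      by (intro gamma_t_delete_lt_4[of "{b, t, q}"] card_le_3)
        (use t s ts q sides_in_V in \<open>auto simp: ball_V\<close>)
  qed
qed

lemma delete_vertex:
  assumes "admissible X Y E" "admissible Y X E" and x: "x \<in> X" and y: "y \<in> Y" and w: "w \<in> V"
  shows "gamma_t (V - {w}) (del_vertex_edges E w) < 4"
  using w
proof (cases rule: in_V_cases)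
  case 1 then show ?thesis
    by (intro gamma_t_delete_lt_4[of "{a, c, b}"] card_le_3) (use sides_in_V in \<open>auto simp: ball_V\<close>)
next
  case 2 then show ?thesis
    by (intro gamma_t_delete_lt_4[of "{b, y, v}"] card_le_3) (use y sides_in_V in \<open>auto simp: ball_V\<close>)
next
  case 3 then show ?thesis
    by (intro gamma_t_delete_lt_4[of "{a, x, v}"] card_le_3) (use x sides_in_V in \<open>auto simp: ball_V\<close>)
next
  case 4 then show ?thesis
    by (intro gamma_t_delete_lt_4[of "{v, x, y}"] card_le_3) (use x y sides_in_V in \<open>auto simp: ball_V\<close>)
next
  case 5 then show ?thesis using delete_side_vertex[OF assms(1)] by blast
next
  case 6 then show ?thesis using skeleton.delete_side_vertex[OF swap assms(2)] by blast
qed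

lemma card_V: "card V = card (X \<union> Y) + 4"
proof -
  have "V = {v, a, b, c} \<union> (X \<union> Y)" using vertices by auto
  moreover have "card {v, a, b, c} = 4" by simp
  ultimately show ?thesis
    using card_Un_disjoint[of "{v, a, b, c}" "X \<union> Y"] finite_sides hub_outside by simp
qed

lemma degree_v: "degree V E v = card (X \<union> Y)"
proof -
  have "{w \<in> V. E v w} = X \<union> Y" using sides_in_V by auto
  then show ?thesis unfolding degree_def by simp
qed

text \<open>A side vertex u \<in> X sees v and a, and misses itself and some t \<in> Y inside X \<union> Y;
  so its degree lies between 2 and |X \<union> Y| = deg v.\<close>

lemma side_degree:
  assumes adm: "admissible X Y E" and u: "u \<in> X"
  shows "2 \<le> degree V E u \<and> degree V E u \<le> card (X \<union> Y)"
proof -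
  obtain t where t: "t \<in> Y" "\<not> E u t" using admissible_non_neighbour[OF adm u] by blast
  have ut: "u \<noteq> t" using u t side_not_both by blast
  have fin: "finite (X \<union> Y)" using finite_sides by blast
  have two: "card {u, t} = 2" "card {u, t} \<le> card (X \<union> Y)"
    using ut by simp (use u t fin in \<open>intro card_mono, auto\<close>)
  have "{w \<in> V. E u w} \<subseteq> {v, a} \<union> (X \<union> Y - {u, t})"
    using u t side_not_both by (auto simp: vertices)
  then have "degree V E u \<le> card ({v, a} \<union> (X \<union> Y - {u, t}))"
    unfolding degree_def using fin by (intro card_mono) auto
  also have "\<dots> \<le> card {v, a} + card (X \<union> Y - {u, t})"
    by (rule card_Un_le)
  also have "\<dots> = card (X \<union> Y)"
    using card_Diff_subset[of "{u, t}" "X \<union> Y"] two u t by simp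
  finally have upper: "degree V E u \<le> card (X \<union> Y)" .
  have "{v, a} \<subseteq> {w \<in> V. E u w}" using u sides_in_V by auto
  then have "card {v, a} \<le> degree V E u"
    unfolding degree_def using finite_V by (intro card_mono) auto
  then show ?thesis using upper by simp
qed

lemma degree_bounds:
  assumes "admissible X Y E" "admissible Y X E" "X \<noteq> {}" "Y \<noteq> {}" and w: "w \<in> V"
  shows "2 \<le> degree V E w \<and> degree V E w \<le> card (X \<union> Y)"
proof -
  have cXY: "card (X \<union> Y) = card X + card Y"
    using card_Un_disjoint finite_sides sides_disjoint by blast
  have ne: "1 \<le> card X" "1 \<le> card Y"
    using assms(3,4) finite_sides by (auto simp: Suc_le_eq card_gt_0_iff)
  from w show ?thesis
  proof (cases rule: in_V_cases)
    case 1 then show ?thesis using degree_v cXY ne by simp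
  next
    case 2
    have "{w \<in> V. E a w} = insert c X" using sides_in_V by auto
    then show ?thesis using 2 cXY ne finite_sides unfolding degree_def by simp
  next
    case 3
    have "{w \<in> V. E b w} = insert c Y" using sides_in_V by auto
    then show ?thesis using 3 cXY ne finite_sides unfolding degree_def by simp
  next
    case 4
    have "{w \<in> V. E c w} = {a, b}" using sides_in_V by auto
    then show ?thesis using 4 cXY ne unfolding degree_def by simp
  next
    case 5 then show ?thesis using side_degree[OF assms(1)] by blast
  next
    case 6 then show ?thesis
      using skeleton.side_degree[OF swap assms(2)] by (simp add: Un_commute)
  qed
qed

theorem extremal:
  assumes adm: "admissible X Y E" "admissible Y X E" and ne: "X \<noteq> {}" "Y \<noteq> {}"
  shows "m_gamma_t_critical 4 V E \<and> card V = max_degree V E + 4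
    \<and> max_degree V E = card (X \<union> Y) \<and> 2 \<le> min_degree V E"
proof -
  obtain x y where xy: "x \<in> X" "y \<in> Y" using ne by blast
  note deg = degree_bounds[OF adm ne]
  have max: "max_degree V E = card (X \<union> Y)"
    unfolding max_degree_def
    using deg degree_v sides_in_V finite_V by (intro Max_eqI) force+
  have min: "2 \<le> min_degree V E"
    unfolding min_degree_def using deg finite_V sides_in_V by (subst Min_ge_iff) auto
  have no_isolated: "no_isolated V E"
    unfolding no_isolated_def
  proof
    fix w assume "w \<in> V"
    then have "{u \<in> V. E w u} \<noteq> {}" using deg[of w] unfolding degree_def by (intro notI) simp
    then show "\<exists>u \<in> V. E w u" by blast
  qed
  have "gamma_t_critical V E"
    unfolding gamma_t_critical_def
    using no_isolated delete_vertex[OF adm xy] gamma_t_eq_4[OF adm xy] by simp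
  then show ?thesis
    unfolding m_gamma_t_critical_def using gamma_t_eq_4[OF adm xy] max min card_V by simp
qed

end

text \<open>In a 4-critical graph without leaves every vertex x has a critical set: at most
  three vertices, none adjacent to x, totally dominating G - x (a neighbour of x in it would
  make it a total dominating set of G).\<close>

definition critical_sets :: "nat set \<Rightarrow> (nat \<Rightarrow> nat \<Rightarrow> bool) \<Rightarrow> bool" where
  "critical_sets V E \<longleftrightarrow> (\<forall>x \<in> V. \<exists>S. S \<subseteq> V - {x} \<and> card S \<le> 3 \<and>
     (\<forall>w \<in> V - {x}. \<exists>u \<in> S. E w u) \<and> (\<forall>u \<in> S. \<not> E x u))"

lemma neighbour_other_than:
  assumes "2 \<le> degree V E w"
  obtains u where "u \<in> V" "E w u" "u \<noteq> x"
proof -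
  have "\<not> {u \<in> V. E w u} \<subseteq> {x}"
    using assms card_mono[of "{x}" "{u \<in> V. E w u}"] unfolding degree_def by fastforce
  then show ?thesis using that by blast
qed

lemma critical_necessary:
  assumes crit: "m_gamma_t_critical 4 V E"
    and min_deg: "\<And>u. u \<in> V \<Longrightarrow> 2 \<le> degree V E u"
  shows "\<And>S. total_dominating V E S \<Longrightarrow> 4 \<le> card S" and "critical_sets V E"
proof -
  have g4: "gamma_t V E = 4" and gc: "gamma_t_critical V E"
    using crit unfolding m_gamma_t_critical_def by blast+
  show no_small: "4 \<le> card S" if "total_dominating V E S" for S
    using gamma_t_le[OF that] g4 by simp
  show "critical_sets V E"
    unfolding critical_sets_def
  proof
    fix x assume xV: "x \<in> V"
    have "\<not> (\<exists>u. E x u \<and> is_leaf V E u)"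
      using min_deg unfolding is_leaf_def by fastforce
    then have lt: "gamma_t (V - {x}) (del_vertex_edges E x) < 4"
      using gc xV g4 unfolding gamma_t_critical_def by auto
    have "total_dominating (V - {x}) (del_vertex_edges E x) (V - {x})"
      unfolding total_dominating_def del_vertex_edges_def
    proof (intro conjI ballI subset_refl)
      fix w assume w: "w \<in> V - {x}"
      obtain u where "u \<in> V" "E w u" "u \<noteq> x" using neighbour_other_than min_deg w by blast
      then show "\<exists>u \<in> V - {x}. E w u \<and> w \<noteq> x \<and> u \<noteq> x" using w by auto
    qed
    then obtain S where S: "total_dominating (V - {x}) (del_vertex_edges E x) S"
      "card S = gamma_t (V - {x}) (del_vertex_edges E x)"
      using gamma_t_witness by blast
    have sub: "S \<subseteq> V - {x}" and dom: "\<forall>w \<in> V - {x}. \<exists>u \<in> S. E w u"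
      using S(1) unfolding total_dominating_def del_vertex_edges_def by blast+
    have card: "card S \<le> 3" using S(2) lt by linarith
    have "\<forall>u \<in> S. \<not> E x u"
    proof (rule ccontr)
      assume "\<not> (\<forall>u \<in> S. \<not> E x u)"
      then obtain u0 where "u0 \<in> S" "E x u0" by blast
      then have "total_dominating V E S"
        using sub dom unfolding total_dominating_def by blast
      then show False using no_small card by fastforce
    qed
    then show "\<exists>S. S \<subseteq> V - {x} \<and> card S \<le> 3 \<and> (\<forall>w \<in> V - {x}. \<exists>u \<in> S. E w u) \<and> (\<forall>u \<in> S. \<not> E x u)"
      using sub card dom by blast
  qed
qed

locale extremal_setting =
  fixes V :: "nat set" and E :: "nat \<Rightarrow> nat \<Rightarrow> bool" and v :: nat
  assumes graph: "simple_graph V E"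
    and no_small_tds: "\<And>S. total_dominating V E S \<Longrightarrow> 4 \<le> card S"
    and crit_sets: "critical_sets V E"
    and min_deg: "\<And>u. u \<in> V \<Longrightarrow> 2 \<le> degree V E u"
    and hub: "v \<in> V"
    and order: "card V = degree V E v + 4"
    and hub_degree: "1 \<le> degree V E v"
begin

definition N :: "nat set" where "N = {u \<in> V. E v u}"
definition A :: "nat set" where "A = V - N - {v}"

lemma sym: "E x y \<Longrightarrow> E y x" and irrefl [simp]: "\<not> E x x"
  and edge_in_V: "E x y \<Longrightarrow> x \<in> V \<and> y \<in> V" and finite_V: "finite V"
  using graph unfolding simple_graph_def by blast+

lemma in_N: "u \<in> N \<longleftrightarrow> E v u"
  unfolding N_def using edge_in_V by auto

lemma N_in_V: "u \<in> N \<Longrightarrow> u \<in> V \<and> u \<noteq> v"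
  unfolding N_def by auto

lemma degree_hub: "degree V E v = card N"
  unfolding N_def degree_def ..

lemma in_A: "w \<in> A \<longleftrightarrow> w \<in> V \<and> \<not> E v w \<and> w \<noteq> v"
  unfolding A_def N_def by auto

lemma V_split: "V = {v} \<union> N \<union> A"
  unfolding A_def N_def using hub by auto

lemma card_A: "card A = 3"
proof -
  have "v \<notin> N" "N \<subseteq> V" unfolding N_def by auto
  moreover note degree_hub
  moreover have "A = V - insert v N" unfolding A_def by auto
  ultimately show ?thesis
    using order hub finite_V card_Diff_subset[of "insert v N" V] finite_subset by fastforce
qed

text \<open>The critical set of the hub v avoids N, hence lies in A: so A dominates every vertex but v.\<close>

lemma A_dominates:
  assumes "w \<in> V" "w \<noteq> v"
  shows "\<exists>u \<in> A. E w u"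
proof -
  obtain S where S: "S \<subseteq> V - {v}" "\<forall>w \<in> V - {v}. \<exists>u \<in> S. E w u" "\<forall>u \<in> S. \<not> E v u"
    using crit_sets hub unfolding critical_sets_def by meson
  have "S \<subseteq> A"
  proof
    fix u assume "u \<in> S"
    then show "u \<in> A" using S(1,3) in_A by blast
  qed
  moreover obtain u where "u \<in> S" "E w u" using S(2) assms by blast
  ultimately show ?thesis by blast
qed

text \<open>If u \<in> N sees x \<in> A, some vertex of A sees neither, since otherwise {v, u, x} would be
  a total dominating set of size 3.\<close>

lemma A_escape:
  assumes u: "u \<in> N" and x: "x \<in> A" and e: "E u x"
  shows "\<exists>w \<in> A. \<not> E w u \<and> \<not> E w x"
proof (rule ccontr)
  assume nn: "\<not> ?thesis"
  have "total_dominating V E {v, u, x}"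
    unfolding total_dominating_def
  proof (intro conjI ballI)
    show "{v, u, x} \<subseteq> V" using hub u x unfolding N_def in_A by auto
    fix z assume "z \<in> V"
    then consider "z = v" | "z \<in> N" | "z \<in> A" using V_split by blast
    then show "\<exists>y \<in> {v, u, x}. E z y"
    proof cases
      case 1 then show ?thesis using u in_N by blast
    next
      case 2 then show ?thesis using in_N sym by blast
    next
      case 3 then show ?thesis using nn by blast
    qed
  qed
  then show False using no_small_tds[of "{v, u, x}"] card_le_3[of v u x] by linarith
qed

text \<open>Each vertex of A has a neighbour in A, so the three vertices of A contain a path a - c - b.\<close>

lemma A_path:
  obtains a b c where "A = {a, b, c}" "distinct [a, b, c]" "E c a" "E c b"
proof -
  obtain a1 a2 a3 where A3: "A = {a1, a2, a3}" "a1 \<noteq> a2" "a2 \<noteq> a3" "a1 \<noteq> a3"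
    using card_A card_3_iff by metis
  have nbr: "\<exists>u \<in> A. E w u" if "w \<in> A" for w
    using A_dominates that in_A by blast
  have "E a1 a2 \<or> E a1 a3" "E a1 a2 \<or> E a2 a3" "E a1 a3 \<or> E a2 a3"
    using nbr[of a1] nbr[of a2] nbr[of a3] A3 sym by auto
  then consider "E a1 a2" "E a1 a3" | "E a2 a1" "E a2 a3" | "E a3 a1" "E a3 a2"
    using sym by blast
  then show ?thesis
  proof cases
    case 1 then show ?thesis using that[of a2 a3 a1] A3 by auto
  next
    case 2 then show ?thesis using that[of a1 a3 a2] A3 by auto
  next
    case 3 then show ?thesis using that[of a1 a2 a3] A3 by auto
  qed
qed

text \<open>A vertex of A adjacent to both other vertices of A has no neighbour in N: the vertex
  escaping an edge towards it (lemma A_escape) could only be itself.\<close>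

lemma dominating_vertex_of_A:
  assumes A: "A = {a, b, c}" "distinct [a, b, c]" "E c a" "E c b" and u: "u \<in> N"
  shows "\<not> E u c"
proof
  assume e: "E u c"
  obtain w where "w \<in> A" "\<not> E w u" "\<not> E w c"
    using A_escape[OF u _ e] A(1) by blast
  then show False using A e sym by auto
qed

lemma N_nonempty: "N \<noteq> {}"
proof
  assume "N = {}"
  then have "degree V E v = 0" using degree_hub by simp
  then show False using hub_degree by simp
qed

text \<open>If a and b were adjacent, no vertex of A would have a neighbour in N, contradicting A_dominates.\<close>

lemma path_ends_nonadjacent:
  assumes A: "A = {a, b, c}" "distinct [a, b, c]" "E c a" "E c b"
  shows "\<not> E a b"
proof
  assume ab: "E a b"
  have "\<not> E u a" "\<not> E u b" "\<not> E u c" if "u \<in> N" for u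
  proof -
    show "\<not> E u a"
      using dominating_vertex_of_A[of b c a u] A ab sym that by (auto simp: insert_commute)
    show "\<not> E u b"
      using dominating_vertex_of_A[of a c b u] A ab sym that by (auto simp: insert_commute)
    show "\<not> E u c" using dominating_vertex_of_A[OF A that] .
  qed
  moreover obtain u where u: "u \<in> N" using N_nonempty by blast
  moreover obtain x where "x \<in> A" "E u x"
    using A_dominates[of u] N_in_V[OF u] by blast
  ultimately show False using A by auto
qed

lemma N_sees_one_end:
  assumes A: "A = {a, b, c}" "distinct [a, b, c]" "E c a" "E c b" and u: "u \<in> N"
  shows "E u a \<longleftrightarrow> \<not> E u b"
proof
  assume ua: "E u a"
  have "a \<in> A" using A(1) by blast
  then obtain w where w: "w \<in> A" "\<not> E w u" "\<not> E w a" using A_escape[OF u _ ua] by blast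
  have "w = a \<or> w = b \<or> w = c" using w(1) A(1) by blast
  show "\<not> E u b"
  proof
    assume "E u b"
    then show False using \<open>w = a \<or> w = b \<or> w = c\<close> w(2,3) sym[OF ua] sym[OF \<open>E u b\<close>] A(3)
      by auto
  qed
next
  assume "\<not> E u b"
  obtain x where x: "x \<in> A" "E u x"
    using A_dominates[of u] N_in_V[OF u] by blast
  have "x = a \<or> x = b \<or> x = c" using x(1) A(1) by blast
  then show "E u a" using x(2) \<open>\<not> E u b\<close> dominating_vertex_of_A[OF A u] by auto
qed

lemma A_neighbours:
  assumes "x \<in> A" "E x u"
  shows "u \<in> N \<or> u \<in> A"
proof -
  have "u \<in> V" using edge_in_V[OF assms(2)] by blast
  moreover have "u \<noteq> v" using assms sym[of x v] in_A by blast
  ultimately show ?thesis using V_split by blast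
qed

lemma end_neighbours:
  assumes A: "A = {a, b, c}" "distinct [a, b, c]" "E c a" "E c b"
    and x: "x = a \<or> x = b"
  shows "E x u \<longleftrightarrow> u = c \<or> (u \<in> N \<and> E u x)"
proof
  assume e: "E x u"
  have "x \<in> A" using x A(1) by blast
  from A_neighbours[OF this e] show "u = c \<or> (u \<in> N \<and> E u x)"
  proof
    assume "u \<in> N"
    then show ?thesis using sym[OF e] by blast
  next
    assume "u \<in> A"
    then have "u = a \<or> u = b \<or> u = c" using A(1) by blast
    moreover have "u \<noteq> x" using e by auto
    moreover have "\<not> E a b" "\<not> E b a"
      using path_ends_nonadjacent[OF A] sym[of b a] by auto
    ultimately show ?thesis using x e by blast
  qed
next
  show "u = c \<or> (u \<in> N \<and> E u x) \<Longrightarrow> E x u"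
    using A(3,4) x sym[of c x] sym[of u x] by auto
qed

lemma centre_neighbours:
  assumes A: "A = {a, b, c}" "distinct [a, b, c]" "E c a" "E c b"
  shows "E c u \<longleftrightarrow> u = a \<or> u = b"
proof
  assume e: "E c u"
  have "c \<in> A" using A(1) by blast
  moreover have "u \<notin> N" using dominating_vertex_of_A[OF A] sym[OF e] by blast
  ultimately show "u = a \<or> u = b" using A_neighbours[OF _ e] A(1) e by auto
qed (use A(3,4) in blast)

theorem skeleton_exists:
  obtains a b c X Y where "skeleton V E v a b c X Y" "card (X \<union> Y) = degree V E v"
    "X \<noteq> {}" "Y \<noteq> {}"
proof -
  obtain a b c where A: "A = {a, b, c}" "distinct [a, b, c]" "E c a" "E c b"
    using A_path by blast
  note one = N_sees_one_end[OF A]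
  define X where "X = {u \<in> N. E u a}"
  define Y where "Y = {u \<in> N. E u b}"
  have XY: "X \<union> Y = N" "X \<inter> Y = {}" unfolding X_def Y_def using one by auto
  have abcA: "a \<in> A" "b \<in> A" "c \<in> A" using A by auto
  then have abcV: "a \<in> V \<and> \<not> E v a \<and> a \<noteq> v" "b \<in> V \<and> \<not> E v b \<and> b \<noteq> v"
    "c \<in> V \<and> \<not> E v c \<and> c \<noteq> v" using in_A by blast+
  have sk: "skeleton V E v a b c X Y"
  proof
    show "simple_graph V E" by (fact graph)
    show "V = {v, a, b, c} \<union> X \<union> Y" using V_split A(1) XY(1) by blast
    show "distinct [v, a, b, c]" using A(2) abcV by auto
    show "X \<inter> Y = {}" by (fact XY(2))
    show "{v, a, b, c} \<inter> (X \<union> Y) = {}" using XY(1) abcV in_N by auto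
    show "E v u \<longleftrightarrow> u \<in> X \<union> Y" for u using XY(1) in_N by blast
    show "E a u \<longleftrightarrow> u = c \<or> u \<in> X" for u using end_neighbours[OF A, of a u] unfolding X_def by blast
    show "E b u \<longleftrightarrow> u = c \<or> u \<in> Y" for u using end_neighbours[OF A, of b u] unfolding Y_def by blast
    show "E c u \<longleftrightarrow> u = a \<or> u = b" for u by (rule centre_neighbours[OF A])
  qed
  have "X \<noteq> {}" "Y \<noteq> {}"
  proof -
    have "2 \<le> degree V E a" using min_deg abcV by blast
    then obtain x where "x \<in> V" "E a x" "x \<noteq> c" by (rule neighbour_other_than)
    then show "X \<noteq> {}" using skeleton.adj_a[OF sk] by blast
    have "2 \<le> degree V E b" using min_deg abcV by blast
    then obtain y where "y \<in> V" "E b y" "y \<noteq> c" by (rule neighbour_other_than)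
    then show "Y \<noteq> {}" using skeleton.adj_b[OF sk] by blast
  qed
  moreover have "card (X \<union> Y) = degree V E v" unfolding XY(1) degree_hub ..
  ultimately show ?thesis using that sk by blast
qed

end

context skeleton
begin

text \<open>The first two clauses: otherwise {a, c, p} or {a, p, t} would be a total dominating set.\<close>

lemma small_tds_contradiction:
  assumes no_small: "\<And>S. total_dominating V E S \<Longrightarrow> 4 \<le> card S"
    and "{p, q, r} \<subseteq> V" "\<forall>z \<in> V. \<exists>u \<in> {p, q, r}. E z u"
  shows False
  using no_small[of "{p, q, r}"] card_le_3[of p q r] assms(2,3)
  unfolding total_dominating_def by linarith

lemma non_neighbour_needed:
  assumes no_small: "\<And>S. total_dominating V E S \<Longrightarrow> 4 \<le> card S" and p: "p \<in> X"
  shows "\<exists>t \<in> Y. \<not> E p t"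
proof (rule ccontr)
  assume "\<not> ?thesis"
  then have "\<forall>t \<in> Y. E t p" using sym by blast
  then have "\<forall>z \<in> V. \<exists>u \<in> {a, c, p}. E z u" using p by (auto simp: ball_V)
  then show False using small_tds_contradiction[OF no_small] p sides_in_V by blast
qed

lemma common_non_neighbour_needed:
  assumes no_small: "\<And>S. total_dominating V E S \<Longrightarrow> 4 \<le> card S"
    and p: "p \<in> X" and t: "t \<in> Y" and e: "E p t"
  shows "\<exists>y \<in> Y. \<not> E y p \<and> \<not> E y t"
proof (rule ccontr)
  assume "\<not> ?thesis"
  then have "\<forall>y \<in> Y. E y p \<or> E y t" by blast
  then have "\<forall>z \<in> V. \<exists>u \<in> {a, p, t}. E z u"
    using p t e sym[of p t] side_not_both by (auto simp: ball_V)
  then show False using small_tds_contradiction[OF no_small] p t sides_in_V by blast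
qed

text \<open>The critical set S of a vertex s \<in> X contains b: some vertex of S sees c, and it is not a,
  which sees s.\<close>

lemma side_critical_set:
  assumes crit: "critical_sets V E" and s: "s \<in> X"
  obtains S where "S \<subseteq> V - {s}" "card S \<le> 3" "\<forall>w \<in> V - {s}. \<exists>u \<in> S. E w u"
    "\<forall>u \<in> S. \<not> E s u" "b \<in> S"
proof -
  obtain S where S: "S \<subseteq> V - {s}" "card S \<le> 3" "\<forall>w \<in> V - {s}. \<exists>u \<in> S. E w u"
      "\<forall>u \<in> S. \<not> E s u"
    using crit s sides_in_V(1) unfolding critical_sets_def by (meson subsetD)
  have "a \<notin> S" using S(4) s by auto
  moreover have "c \<in> V - {s}" using s sides_in_V by auto
  then obtain u where "u \<in> S" "E c u" using S(3) by blast
  ultimately have "b \<in> S" by auto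
  with S show thesis using that by blast
qed

text \<open>The critical set of s \<in> X is {b, c, t} with t \<in> Y, or {b, t, q} with t \<in> Y and q \<in> X;
  either way t is a deletion witness for s.\<close>

lemma deletion_needed:
  assumes crit: "critical_sets V E" and s: "s \<in> X"
  shows "\<exists>t \<in> Y. deletion_witness X E s t"
proof -
  obtain S where S: "S \<subseteq> V - {s}" "card S \<le> 3" "\<forall>w \<in> V - {s}. \<exists>u \<in> S. E w u"
      "\<forall>u \<in> S. \<not> E s u" and bS: "b \<in> S"
    using side_critical_set[OF crit s] by blast
  have fS: "finite S" using S(1) finite_V finite_subset by blast
  have nbr: "\<exists>u \<in> S. E w u" if "w \<in> V" "w \<noteq> s" for w using S(3) that by blast
  have nbr_X: "\<exists>u \<in> S. E x u" if "x \<in> X" "x \<noteq> s" for x using nbr that sides_in_V by blast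
  show ?thesis
  proof (cases "c \<in> S")
    case True
    obtain p where p: "p \<in> S" "p \<in> X \<union> Y" using nbr[of v] s sides_in_V by auto
    have inS: "w \<in> S \<Longrightarrow> w = b \<or> w = c \<or> w = p" for w
      using mem_three_set[OF fS S(2), of b c p w] bS True p side_ne_hub[OF p(2)] by auto
    have "p \<noteq> s" using p(1) S(1) by blast
    then obtain w where "w \<in> S" "E p w" using nbr[of p] p(2) sides_in_V by blast
    then have pY: "p \<in> Y" using inS[of w] p(2) side_ne_hub[OF p(2)] by auto
    have "E x p" if x: "x \<in> X" "x \<noteq> s" for x
    proof -
      obtain w where "w \<in> S" "E x w" using nbr_X x by blast
      then show ?thesis using inS[of w] x side_not_both by auto
    qed
    then show ?thesis using pY p(1) S(4) deletion_witness_direct by blast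
  next
    case False
    obtain q where q: "q \<in> S" "E a q" using nbr[of a] s sides_in_V by auto
    with False have qX: "q \<in> X" by auto
    obtain t where t: "t \<in> S" "E b t" using nbr[of b] s sides_in_V by auto
    with False have tY: "t \<in> Y" by auto
    have inS: "w \<in> S \<Longrightarrow> w = b \<or> w = q \<or> w = t" for w
      using mem_three_set[OF fS S(2), of b q t w] bS q t qX tY side_not_both by auto
    have qs: "q \<noteq> s" using q(1) S(1) by blast
    then obtain w where "w \<in> S" "E q w" using nbr_X qX by blast
    then have "E q t" using inS[of w] qX side_not_both by auto
    moreover have "E x t \<or> E x q" if x: "x \<in> X" "x \<noteq> s" for x
    proof -
      obtain w where "w \<in> S" "E x w" using nbr_X x by blast
      then show ?thesis using inS[of w] x side_not_both by auto
    qed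
    ultimately have "deletion_witness X E s t"
      using t(1) q(1) qX qs S(4) deletion_witness_pair[where q = q] by blast
    then show ?thesis using tY by blast
  qed
qed

theorem admissible_needed:
  assumes "\<And>S. total_dominating V E S \<Longrightarrow> 4 \<le> card S" and "critical_sets V E"
  shows "admissible X Y E"
  unfolding admissible_def
  using non_neighbour_needed[OF assms(1)] common_non_neighbour_needed[OF assms(1)]
    deletion_needed[OF assms(2)] by blast

end

theorem extremal_graph_sides:
  assumes graph: "simple_graph V E" and crit: "m_gamma_t_critical 4 V E"
    and order: "card V = max_degree V E + 4" and min: "2 \<le> min_degree V E"
    and D: "1 \<le> max_degree V E"
  obtains X Y where "admissible X Y E" "admissible Y X E" "X \<inter> Y = {}" "finite X" "finite Y"
    "X \<noteq> {}" "Y \<noteq> {}" "card X + card Y = max_degree V E"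
proof -
  have fin: "finite V" and ne: "V \<noteq> {}" using graph order unfolding simple_graph_def by auto
  have min_deg: "2 \<le> degree V E u" if "u \<in> V" for u
  proof -
    have "min_degree V E \<le> degree V E u"
      unfolding min_degree_def using fin that by (intro Min_le) auto
    then show ?thesis using min by linarith
  qed
  have "max_degree V E \<in> degree V E ` V"
    unfolding max_degree_def using fin ne by (intro Max_in) auto
  then obtain v where v: "v \<in> V" "degree V E v = max_degree V E" by auto
  have no_small: "\<And>S. total_dominating V E S \<Longrightarrow> 4 \<le> card S"
    and crit_sets: "critical_sets V E"
    using critical_necessary[OF crit min_deg] by blast+
  have "extremal_setting V E v"
  proof
    show "simple_graph V E" by (fact graph)
    show "\<And>S. total_dominating V E S \<Longrightarrow> 4 \<le> card S" by (fact no_small)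
    show "critical_sets V E" by (fact crit_sets)
    show "\<And>u. u \<in> V \<Longrightarrow> 2 \<le> degree V E u" using min_deg by blast
    show "v \<in> V" by (fact v(1))
    show "card V = degree V E v + 4" using order v(2) by simp
    show "1 \<le> degree V E v" using D v(2) by simp
  qed
  then obtain a b c X Y where sk: "skeleton V E v a b c X Y" and
    card_sides: "card (X \<union> Y) = degree V E v" and sides_ne: "X \<noteq> {}" "Y \<noteq> {}"
    by (rule extremal_setting.skeleton_exists)
  have disj: "X \<inter> Y = {}" and fin_sides: "finite X" "finite Y"
    using skeleton.sides_disjoint[OF sk] skeleton.finite_sides[OF sk] by auto
  show thesis
  proof (rule that)
    show "admissible X Y E" by (rule skeleton.admissible_needed[OF sk no_small crit_sets])
    show "admissible Y X E" by (rule skeleton.admissible_needed[OF skeleton.swap[OF sk] no_small crit_sets])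
    show "card X + card Y = max_degree V E"
      using card_Un_disjoint[OF fin_sides disj] card_sides v(2) by simp
  qed (use disj fin_sides sides_ne in auto)
qed

text \<open>A side consisting of a single vertex x forces the other side to be a single vertex:
  x sees no vertex of Y (first clause), so the deletion clause for s \<in> Y can only be met
  vacuously.\<close>

lemma admissible_singleton:
  assumes adm: "admissible Y {x} E" and y: "y \<in> Y" "y' \<in> Y"
  shows "y = y'"
proof (rule ccontr)
  assume ne: "y \<noteq> y'"
  have no_edge: "\<not> E p x" if "p \<in> Y" for p
    using admissible_non_neighbour[OF adm that] by blast
  obtain t where "t \<in> {x}" and
    alt: "(\<forall>z \<in> Y. z \<noteq> y \<longrightarrow> E z t) \<or>
       (\<exists>q \<in> Y. q \<noteq> y \<and> \<not> E y q \<and> E q t \<and> (\<forall>z \<in> Y. z \<noteq> y \<longrightarrow> E z t \<or> E z q))"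
    using admissible_deletion[OF adm y(1)] unfolding deletion_witness_def by blast
  then have "t = x" by blast
  from alt show False
  proof
    assume "\<forall>z \<in> Y. z \<noteq> y \<longrightarrow> E z t"
    then show False using no_edge[OF y(2)] y(2) ne \<open>t = x\<close> by auto
  next
    assume "\<exists>q \<in> Y. q \<noteq> y \<and> \<not> E y q \<and> E q t \<and> (\<forall>z \<in> Y. z \<noteq> y \<longrightarrow> E z t \<or> E z q)"
    then show False using no_edge \<open>t = x\<close> by blast
  qed
qed

lemma list_of_length:
  "length xs = 2 \<Longrightarrow> \<exists>a b. xs = [a, b]"
  "length xs = 3 \<Longrightarrow> \<exists>a b c. xs = [a, b, c]"
  "length xs = 4 \<Longrightarrow> \<exists>a b c d. xs = [a, b, c, d]"
  "length xs = 5 \<Longrightarrow> \<exists>a b c d e. xs = [a, b, c, d, e]"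
  by (auto simp: length_Suc_conv eval_nat_numeral)

text \<open>The three remaining small configurations are excluded by exhaustive propositional
  reasoning over the possible edges.\<close>

lemma no_admissible_pair_2_3:
  assumes sym: "\<And>x y. E x y \<longleftrightarrow> E y x" and irr: "\<And>x. \<not> E x x"
    and "admissible {x1, x2} {y1, y2, y3} E" "admissible {y1, y2, y3} {x1, x2} E"
    and "distinct [x1, x2, y1, y2, y3]"
  shows False
  using assms(3-) unfolding admissible_def deletion_witness_def by (simp add: sym irr) argo

lemma no_admissible_pair_2_5:
  assumes sym: "\<And>x y. E x y \<longleftrightarrow> E y x" and irr: "\<And>x. \<not> E x x"
    and "admissible {x1, x2} {y1, y2, y3, y4, y5} E" "admissible {y1, y2, y3, y4, y5} {x1, x2} E"
    and "distinct [x1, x2, y1, y2, y3, y4, y5]"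
  shows False
  using assms(3-) unfolding admissible_def deletion_witness_def by (simp add: sym irr) argo

lemma no_admissible_pair_3_4:
  assumes sym: "\<And>x y. E x y \<longleftrightarrow> E y x" and irr: "\<And>x. \<not> E x x"
    and "admissible {x1, x2, x3} {y1, y2, y3, y4} E" "admissible {y1, y2, y3, y4} {x1, x2, x3} E"
    and "distinct [x1, x2, x3, y1, y2, y3, y4]"
  shows False
  using assms(3-) unfolding admissible_def deletion_witness_def by (simp add: sym irr) argo

lemma no_small_odd_admissible_pair_ordered:
  assumes sym: "\<And>x y. E x y \<longleftrightarrow> E y x" and irr: "\<And>x. \<not> E x x"
    and adm: "admissible X Y E" "admissible Y X E" and disj: "X \<inter> Y = {}"
    and fin: "finite X" "finite Y" and ne: "X \<noteq> {}"
    and odd: "odd (card X + card Y)" and small: "card X + card Y \<le> 7"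
    and lt: "card X < card Y"
  shows False
proof -
  obtain xs where xs: "set xs = X" "distinct xs" "length xs = card X"
    using finite_distinct_list[OF fin(1)] distinct_card by metis
  obtain ys where ys: "set ys = Y" "distinct ys" "length ys = card Y"
    using finite_distinct_list[OF fin(2)] distinct_card by metis
  have dist: "distinct (xs @ ys)" using xs ys disj by simp
  have "card X \<noteq> 1"
  proof
    assume "card X = 1"
    then obtain x where "X = {x}" using card_1_singletonE by blast
    then have "card Y \<le> 1"
      using admissible_singleton[of Y x E] adm(2) fin(2) by (simp add: card_le_Suc0_iff_eq)
    then show False using lt \<open>card X = 1\<close> by simp
  qed
  then consider "card X = 2" "card Y = 3" | "card X = 2" "card Y = 5" | "card X = 3" "card Y = 4"
    using odd small lt ne fin(1) by (cases "card X") (auto, presburger)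
  then show False
  proof cases
    case 1
    then obtain x1 x2 y1 y2 y3 where "xs = [x1, x2]" "ys = [y1, y2, y3]"
      using list_of_length xs(3) ys(3) by metis
    then show False using no_admissible_pair_2_3[of E x1 x2 y1 y2 y3, OF sym irr] adm dist xs(1) ys(1) by auto
  next
    case 2
    then obtain x1 x2 y1 y2 y3 y4 y5 where "xs = [x1, x2]" "ys = [y1, y2, y3, y4, y5]"
      using list_of_length xs(3) ys(3) by metis
    then show False using no_admissible_pair_2_5[of E x1 x2 y1 y2 y3 y4 y5, OF sym irr] adm dist xs(1) ys(1) by auto
  next
    case 3
    then obtain x1 x2 x3 y1 y2 y3 y4 where "xs = [x1, x2, x3]" "ys = [y1, y2, y3, y4]"
      using list_of_length xs(3) ys(3) by metis
    then show False using no_admissible_pair_3_4[of E x1 x2 x3 y1 y2 y3 y4, OF sym irr] adm dist xs(1) ys(1) by auto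
  qed
qed

theorem no_small_odd_admissible_pair:
  assumes sym: "\<And>x y. E x y \<longleftrightarrow> E y x" and irr: "\<And>x. \<not> E x x"
    and adm: "admissible X Y E" "admissible Y X E" and disj: "X \<inter> Y = {}"
    and fin: "finite X" "finite Y" and ne: "X \<noteq> {}" "Y \<noteq> {}"
    and odd: "odd (card X + card Y)" and small: "card X + card Y \<le> 7"
  shows False
proof (cases "card X < card Y")
  case True
  then show False using no_small_odd_admissible_pair_ordered[OF sym irr adm disj fin ne(1) odd small] by blast
next
  case False
  then have "card Y < card X" using odd by presburger
  moreover have "Y \<inter> X = {}" using disj by blast
  ultimately show False
    using no_small_odd_admissible_pair_ordered[OF sym irr adm(2,1) _ fin(2,1) ne(2)] odd small
    by (simp add: add.commute)
qed

text \<open>Hub 0, path 1 - 3 - 2, X = {x_j | j < k}, Y = {y_i | i < k}, where x_j sees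
  y_i iff i \<noteq> j (a crown graph); for odd degree three further vertices p_0, p_1, p_2 join Y, with
  x_j adjacent to p_i iff i \<noteq> j and y_i adjacent to p_{(i+1) mod 3}.\<close>

abbreviation xv :: "nat \<Rightarrow> nat" where "xv j \<equiv> 4 + 3 * j"
abbreviation yv :: "nat \<Rightarrow> nat" where "yv i \<equiv> 5 + 3 * i"
abbreviation pv :: "nat \<Rightarrow> nat" where "pv i \<equiv> 6 + 3 * i"

definition crown_X :: "nat \<Rightarrow> nat set" where
  "crown_X k = xv ` {..<k}"

definition crown_Y :: "nat \<Rightarrow> bool \<Rightarrow> nat set" where
  "crown_Y k d = yv ` {..<k} \<union> (if d then pv ` {..<3} else {})"

definition crown_V :: "nat \<Rightarrow> bool \<Rightarrow> nat set" where
  "crown_V k d = {0, 1, 2, 3} \<union> crown_X k \<union> crown_Y k d"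

definition crown_side_edge :: "nat \<Rightarrow> bool \<Rightarrow> nat \<Rightarrow> nat \<Rightarrow> bool" where
  "crown_side_edge k d x y \<longleftrightarrow>
     (\<exists>i<k. \<exists>j<k. i \<noteq> j \<and> x = xv j \<and> y = yv i) \<or>
     (d \<and> (\<exists>j<k. \<exists>i<3. i \<noteq> j \<and> x = xv j \<and> y = pv i)) \<or>
     (d \<and> (\<exists>i<3. x = yv i \<and> y = pv ((i + 1) mod 3)))"

definition crown_hub_edge :: "nat \<Rightarrow> bool \<Rightarrow> nat \<Rightarrow> nat \<Rightarrow> bool" where
  "crown_hub_edge k d x y \<longleftrightarrow>
     (x = 0 \<and> y \<in> crown_X k \<union> crown_Y k d) \<or> (x = 1 \<and> (y = 3 \<or> y \<in> crown_X k)) \<or>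
     (x = 2 \<and> (y = 3 \<or> y \<in> crown_Y k d))"

definition crown_E :: "nat \<Rightarrow> bool \<Rightarrow> nat \<Rightarrow> nat \<Rightarrow> bool" where
  "crown_E k d x y \<longleftrightarrow> crown_hub_edge k d x y \<or> crown_hub_edge k d y x \<or>
     crown_side_edge k d x y \<or> crown_side_edge k d y x"

lemma vertex_codes_distinct [simp]:
  "xv j \<noteq> yv i" "yv i \<noteq> xv j" "xv j \<noteq> pv i" "pv i \<noteq> xv j" "yv j \<noteq> pv i" "pv i \<noteq> yv j"
  by presburger+

lemma mem_crown_X: "u \<in> crown_X k \<longleftrightarrow> (\<exists>j<k. u = xv j)"
  unfolding crown_X_def by auto

lemma mem_crown_Y: "u \<in> crown_Y k d \<longleftrightarrow> (\<exists>i<k. u = yv i) \<or> (d \<and> (\<exists>i<3. u = pv i))"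
  unfolding crown_Y_def by auto

lemma crown_E_sym: "crown_E k d x y \<longleftrightarrow> crown_E k d y x"
  unfolding crown_E_def by blast

lemma crown_edge_XX: "\<not> crown_E k d (xv j) (xv j')"
  and crown_edge_YY: "\<not> crown_E k d (yv j) (yv j')"
  and crown_edge_PP: "\<not> crown_E k d (pv j) (pv j')"
  unfolding crown_E_def crown_hub_edge_def crown_side_edge_def mem_crown_X mem_crown_Y by auto

lemma crown_edge_XY: "j < k \<Longrightarrow> i < k \<Longrightarrow> crown_E k d (xv j) (yv i) \<longleftrightarrow> i \<noteq> j"
  and crown_edge_XP: "j < k \<Longrightarrow> crown_E k d (xv j) (pv i) \<longleftrightarrow> d \<and> i < 3 \<and> i \<noteq> j"
  and crown_edge_YP: "crown_E k d (yv i) (pv i') \<longleftrightarrow> d \<and> i < 3 \<and> i' = (i + 1) mod 3"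
  unfolding crown_E_def crown_hub_edge_def crown_side_edge_def mem_crown_X mem_crown_Y by auto

lemma crown_skeleton:
  assumes dk: "d \<longrightarrow> 3 \<le> k"
  shows "skeleton (crown_V k d) (crown_E k d) 0 1 2 3 (crown_X k) (crown_Y k d)"
proof
  have "finite (crown_V k d)" unfolding crown_V_def crown_X_def crown_Y_def by auto
  moreover have "crown_E k d x y \<Longrightarrow> x \<in> crown_V k d \<and> y \<in> crown_V k d" for x y
    unfolding crown_E_def crown_hub_edge_def crown_side_edge_def crown_V_def
    using dk by (auto simp: mem_crown_X mem_crown_Y)
  moreover have "\<not> crown_E k d x x" for x
    unfolding crown_E_def crown_hub_edge_def crown_side_edge_def by (auto simp: mem_crown_X mem_crown_Y)
  ultimately show "simple_graph (crown_V k d) (crown_E k d)"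
    unfolding simple_graph_def using crown_E_sym by blast
  show "crown_V k d = {0, 1, 2, 3} \<union> crown_X k \<union> crown_Y k d" unfolding crown_V_def ..
  show "distinct [0, 1, 2, 3 :: nat]" by simp
  show "crown_X k \<inter> crown_Y k d = {}" by (auto simp: mem_crown_X mem_crown_Y)
  have hub: "{0, 1, 2, 3} \<inter> (crown_X k \<union> crown_Y k d) = {}"
    by (auto simp: mem_crown_X mem_crown_Y)
  then show "{0, 1, 2, 3} \<inter> (crown_X k \<union> crown_Y k d) = {}" .
  show "crown_E k d 0 u \<longleftrightarrow> u \<in> crown_X k \<union> crown_Y k d"
    "crown_E k d 1 u \<longleftrightarrow> u = 3 \<or> u \<in> crown_X k"
    "crown_E k d 2 u \<longleftrightarrow> u = 3 \<or> u \<in> crown_Y k d"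
    "crown_E k d 3 u \<longleftrightarrow> u = 1 \<or> u = 2" for u
    unfolding crown_E_def crown_hub_edge_def crown_side_edge_def
    using hub by (auto simp: mem_crown_X mem_crown_Y)
qed

text \<open>On the X side, x_j is deleted using t = y_j, which sees all other x's.\<close>

lemma crown_admissible_X: "admissible (crown_X k) (crown_Y k d) (crown_E k d)"
  unfolding admissible_def
proof (intro conjI ballI impI)
  fix p assume "p \<in> crown_X k"
  then obtain j where j: "j < k" "p = xv j" by (auto simp: mem_crown_X)
  show "\<exists>t \<in> crown_Y k d. \<not> crown_E k d p t"
    using j crown_edge_XY[of j k j d] by (intro bexI[of _ "yv j"]) (auto simp: mem_crown_Y)
  show "\<exists>t \<in> crown_Y k d. deletion_witness (crown_X k) (crown_E k d) p t"
    unfolding deletion_witness_def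
  proof (intro bexI[of _ "yv j"] conjI disjI1 ballI impI)
    show "yv j \<in> crown_Y k d" using j by (auto simp: mem_crown_Y)
    show "\<not> crown_E k d p (yv j)" using j crown_edge_XY[of j k j d] by simp
    fix x assume "x \<in> crown_X k" "x \<noteq> p"
    then obtain j' where "j' < k" "x = xv j'" "j' \<noteq> j" using j by (auto simp: mem_crown_X)
    then show "crown_E k d x (yv j)" using j crown_edge_XY[of j' k j d] by simp
  qed
next
  fix p t assume p: "p \<in> crown_X k" and t: "t \<in> crown_Y k d" and "crown_E k d p t"
  obtain j where j: "j < k" "p = xv j" using p by (auto simp: mem_crown_X)
  from t consider (Y) i where "i < k" "t = yv i" | (P) i where "d" "i < 3" "t = pv i"
    by (auto simp: mem_crown_Y)
  then show "\<exists>y \<in> crown_Y k d. \<not> crown_E k d y p \<and> \<not> crown_E k d y t"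
  proof cases
    case Y
    then show ?thesis
      using j crown_edge_XY[of j k j d] crown_edge_YY[of k d j i] crown_E_sym
      by (intro bexI[of _ "yv j"]) (auto simp: mem_crown_Y)
  next
    case P
    show ?thesis
    proof (cases "j < 3")
      case True
      then show ?thesis using j P crown_edge_XP[of j k d j] crown_edge_PP[of k d j i] crown_E_sym
        by (intro bexI[of _ "pv j"]) (auto simp: mem_crown_Y)
    next
      case False
      then show ?thesis using j P crown_edge_XY[of j k j d] crown_edge_YP[of k d j i] crown_E_sym
        by (intro bexI[of _ "yv j"]) (auto simp: mem_crown_Y)
    qed
  qed
qed

lemma crown_Y_cases:
  assumes "d \<longrightarrow> 3 \<le> k" "p \<in> crown_Y k d"
  obtains (Y) i where "i < k" "p = yv i" | (P) i where "d" "i < 3" "i < k" "p = pv i"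
  using assms by (auto simp: mem_crown_Y)

lemma crown_Y_private:
  assumes dk: "d \<longrightarrow> 3 \<le> k" and p: "p \<in> crown_Y k d"
  shows "\<exists>i<k. \<not> crown_E k d (xv i) p"
  using dk p
proof (cases rule: crown_Y_cases)
  case (Y i) then show ?thesis using crown_edge_XY[of i k i d] by auto
next
  case (P i) then show ?thesis using crown_edge_XP[of i k d i] by auto
qed

lemma mod3_facts:
  assumes "(i::nat) < 3"
  shows "(i + 2) mod 3 < 3" "(i + 2) mod 3 \<noteq> i" "((i + 2) mod 3 + 1) mod 3 = i"
    "(i + 1) mod 3 < 3" "(i + 1) mod 3 \<noteq> i"
proof -
  have "i = 0 \<or> i = 1 \<or> i = 2" using assms by auto
  then show "(i + 2) mod 3 < 3" "(i + 2) mod 3 \<noteq> i" "((i + 2) mod 3 + 1) mod 3 = i"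
    "(i + 1) mod 3 < 3" "(i + 1) mod 3 \<noteq> i" by (elim disjE; simp)+
qed

text \<open>Deleting y_i: the vertex x_i sees every other vertex of Y, except p_i in the odd case,
  which is covered by y_{(i+2) mod 3}; deleting p_i: x_i together with p_{(i+1) mod 3}.\<close>

lemma crown_deletion_y:
  assumes dk: "d \<longrightarrow> 3 \<le> k" and i: "i < k" "\<not> (d \<and> i < 3)"
  shows "deletion_witness (crown_Y k d) (crown_E k d) (yv i) (xv i)"
proof (rule deletion_witness_direct)
  show "\<not> crown_E k d (yv i) (xv i)" using i crown_edge_XY[of i k i d] crown_E_sym by auto
  fix x assume x: "x \<in> crown_Y k d" "x \<noteq> yv i"
  from dk x(1) show "crown_E k d x (xv i)"
  proof (cases rule: crown_Y_cases)
    case (Y i') then show ?thesis using x(2) i crown_edge_XY[of i k i' d] crown_E_sym by auto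
  next
    case (P i') then show ?thesis using i crown_edge_XP[of i k d i'] crown_E_sym by auto
  qed
qed

lemma crown_deletion_y_gadget:
  assumes k: "3 \<le> k" and d and i: "i < 3"
  shows "deletion_witness (crown_Y k d) (crown_E k d) (yv i) (xv i)"
proof (rule deletion_witness_pair[where q = "yv ((i + 2) mod 3)"])
  note m = mod3_facts[OF i]
  have dk: "d \<longrightarrow> 3 \<le> k" using k by simp
  show "\<not> crown_E k d (yv i) (xv i)" using i k crown_edge_XY[of i k i d] crown_E_sym by auto
  show "yv ((i + 2) mod 3) \<in> crown_Y k d" using m k by (auto simp: mem_crown_Y)
  show "yv ((i + 2) mod 3) \<noteq> yv i" using m by simp
  show "\<not> crown_E k d (yv i) (yv ((i + 2) mod 3))" using crown_edge_YY by blast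
  show "crown_E k d (yv ((i + 2) mod 3)) (xv i)"
    using m i k crown_edge_XY[of i k "(i + 2) mod 3" d] crown_E_sym by auto
  fix x assume x: "x \<in> crown_Y k d" "x \<noteq> yv i"
  from dk x(1) show "crown_E k d x (xv i) \<or> crown_E k d x (yv ((i + 2) mod 3))"
  proof (cases rule: crown_Y_cases)
    case (Y i') then show ?thesis using x(2) i k crown_edge_XY[of i k i' d] crown_E_sym by auto
  next
    case (P i')
    show ?thesis
    proof (cases "i' = i")
      case True
      then show ?thesis using P m \<open>d\<close> crown_edge_YP[of k d "(i + 2) mod 3" i'] crown_E_sym by auto
    next
      case False
      then show ?thesis using P i k crown_edge_XP[of i k d i'] crown_E_sym by auto
    qed
  qed
qed

lemma crown_deletion_p:
  assumes k: "3 \<le> k" and d and i: "i < 3"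
  shows "deletion_witness (crown_Y k d) (crown_E k d) (pv i) (xv i)"
proof (rule deletion_witness_pair[where q = "pv ((i + 1) mod 3)"])
  note m = mod3_facts[OF i]
  have dk: "d \<longrightarrow> 3 \<le> k" using k by simp
  show "\<not> crown_E k d (pv i) (xv i)" using i k crown_edge_XP[of i k d i] crown_E_sym by auto
  show "pv ((i + 1) mod 3) \<in> crown_Y k d" using m \<open>d\<close> by (auto simp: mem_crown_Y)
  show "pv ((i + 1) mod 3) \<noteq> pv i" using m by simp
  show "\<not> crown_E k d (pv i) (pv ((i + 1) mod 3))" using crown_edge_PP by blast
  show "crown_E k d (pv ((i + 1) mod 3)) (xv i)"
    using m i k \<open>d\<close> crown_edge_XP[of i k d "(i + 1) mod 3"] crown_E_sym by auto
  fix x assume x: "x \<in> crown_Y k d" "x \<noteq> pv i"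
  from dk x(1) show "crown_E k d x (xv i) \<or> crown_E k d x (pv ((i + 1) mod 3))"
  proof (cases rule: crown_Y_cases)
    case (Y i')
    show ?thesis
    proof (cases "i' = i")
      case True
      then show ?thesis using Y i \<open>d\<close> crown_edge_YP[of k d i' "(i + 1) mod 3"] by auto
    next
      case False
      then show ?thesis using Y i k crown_edge_XY[of i k i' d] crown_E_sym by auto
    qed
  next
    case (P i') then show ?thesis using x(2) i k crown_edge_XP[of i k d i'] crown_E_sym by auto
  qed
qed

lemma crown_admissible_Y:
  assumes dk: "d \<longrightarrow> 3 \<le> k"
  shows "admissible (crown_Y k d) (crown_X k) (crown_E k d)"
  unfolding admissible_def
proof (intro conjI ballI impI)
  fix p assume "p \<in> crown_Y k d"
  then obtain i where "i < k" "\<not> crown_E k d (xv i) p" using crown_Y_private[OF dk] by blast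
  then show "\<exists>t \<in> crown_X k. \<not> crown_E k d p t"
    using crown_E_sym by (intro bexI[of _ "xv i"]) (auto simp: mem_crown_X)
next
  fix p t assume p: "p \<in> crown_Y k d" and t: "t \<in> crown_X k"
  obtain i where i: "i < k" "\<not> crown_E k d (xv i) p" using crown_Y_private[OF dk p] by blast
  obtain j where "t = xv j" using t by (auto simp: mem_crown_X)
  then show "\<exists>y \<in> crown_X k. \<not> crown_E k d y p \<and> \<not> crown_E k d y t"
    using i crown_edge_XX by (intro bexI[of _ "xv i"]) (auto simp: mem_crown_X)
next
  fix s assume s: "s \<in> crown_Y k d"
  from dk s show "\<exists>t \<in> crown_X k. deletion_witness (crown_Y k d) (crown_E k d) s t"
  proof (cases rule: crown_Y_cases)
    case (Y i)
    then have "deletion_witness (crown_Y k d) (crown_E k d) s (xv i)"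
      using crown_deletion_y[OF dk] crown_deletion_y_gadget dk by (cases "d \<and> i < 3") auto
    then show ?thesis using Y by (auto simp: mem_crown_X)
  next
    case (P i)
    then show ?thesis using crown_deletion_p[of k d i] dk by (auto simp: mem_crown_X)
  qed
qed

lemma card_crown_X: "card (crown_X k) = k"
  unfolding crown_X_def by (subst card_image) (auto simp: inj_on_def)

lemma card_crown_sides: "card (crown_X k \<union> crown_Y k d) = 2 * k + (if d then 3 else 0)"
proof -
  have "card (yv ` {..<k}) = k" "card (pv ` {..<3}) = 3"
    by (subst card_image; auto simp: inj_on_def)+
  moreover have "yv ` {..<k} \<inter> pv ` {..<3} = {}" by auto
  ultimately have "card (crown_Y k d) = k + (if d then 3 else 0)"
    unfolding crown_Y_def by (simp add: card_Un_disjoint)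
  moreover have "crown_X k \<inter> crown_Y k d = {}" by (auto simp: mem_crown_X mem_crown_Y)
  ultimately show ?thesis
    using card_Un_disjoint[of "crown_X k" "crown_Y k d"] card_crown_X
    unfolding crown_X_def crown_Y_def by simp
qed

theorem crown_extremal:
  assumes dk: "d \<longrightarrow> 3 \<le> k" and k: "1 \<le> k"
  shows "\<exists>V E. simple_graph V E \<and> m_gamma_t_critical 4 V E \<and> card V = max_degree V E + 4
     \<and> max_degree V E = 2 * k + (if d then 3 else 0) \<and> 2 \<le> min_degree V E"
proof -
  interpret skeleton "crown_V k d" "crown_E k d" 0 1 2 3 "crown_X k" "crown_Y k d"
    by (rule crown_skeleton[OF dk])
  have "xv 0 \<in> crown_X k" "yv 0 \<in> crown_Y k d" using k by (auto simp: mem_crown_X mem_crown_Y)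
  then have "crown_X k \<noteq> {}" "crown_Y k d \<noteq> {}" by auto
  then show ?thesis
    using extremal[OF crown_admissible_X crown_admissible_Y[OF dk]] graph card_crown_sides by metis
qed

theorem mainTheorem7:
  fixes \<Delta> :: nat
  assumes "\<Delta> \<ge> 1"
  shows "(\<exists>V E. simple_graph V E \<and> m_gamma_t_critical 4 V E
            \<and> card V = max_degree V E + 4 \<and> max_degree V E = \<Delta>
            \<and> min_degree V E \<ge> 2)
         \<longleftrightarrow> (\<Delta> \<in> {2, 4, 6, 8} \<or> \<Delta> \<ge> 9)"
proof
  assume "\<exists>V E. simple_graph V E \<and> m_gamma_t_critical 4 V E
            \<and> card V = max_degree V E + 4 \<and> max_degree V E = \<Delta> \<and> min_degree V E \<ge> 2"
  then obtain V E where graph: "simple_graph V E" and extremal: "m_gamma_t_critical 4 V E"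
    "card V = max_degree V E + 4" "2 \<le> min_degree V E" and D: "max_degree V E = \<Delta>"
    by blast
  obtain X Y where sides: "admissible X Y E" "admissible Y X E" "X \<inter> Y = {}" "finite X" "finite Y"
    "X \<noteq> {}" "Y \<noteq> {}" and size: "card X + card Y = \<Delta>"
    using extremal_graph_sides[OF graph extremal] D assms by metis
  show "\<Delta> \<in> {2, 4, 6, 8} \<or> \<Delta> \<ge> 9"
  proof (rule ccontr)
    assume "\<not> ?thesis"
    then have "odd \<Delta>" "\<Delta> \<le> 7" using assms by auto
    then show False
      using no_small_odd_admissible_pair[OF simple_graph_sym[OF graph] simple_graph_irrefl[OF graph]
          sides] size by simp
  qed
next
  assume D: "\<Delta> \<in> {2, 4, 6, 8} \<or> \<Delta> \<ge> 9"
  show "\<exists>V E. simple_graph V E \<and> m_gamma_t_critical 4 V E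
            \<and> card V = max_degree V E + 4 \<and> max_degree V E = \<Delta> \<and> min_degree V E \<ge> 2"
  proof (cases "even \<Delta>")
    case True
    then have "\<Delta> = 2 * (\<Delta> div 2)" "1 \<le> \<Delta> div 2" using assms by auto
    then show ?thesis using crown_extremal[of False "\<Delta> div 2"] by simp
  next
    case False
    then have "\<Delta> = 2 * ((\<Delta> - 3) div 2) + 3" "3 \<le> (\<Delta> - 3) div 2" using D by auto
    then show ?thesis using crown_extremal[of True "(\<Delta> - 3) div 2"] by simp
  qed
qed

end
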